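(* For every $n\ge 6$, $\mathrm{ex}_3(n;\{P,C,P^3_2\cup K^3_3\}\mid M)=2n-4$. That is, every $n$-vertex 3-graph containing two disjoint edges and containing no copy of $P$, of $C$, or of $P^3_2\cup K^3_3$ has at most $2n-4$ edges, and this bound is attained.
   Context: All hypergraphs are 3-uniform; containment means containing an isomorphic copy. $P$ is the loose 3-uniform path of length 3: vertices $a,b,c,d,e,f,g$, edges $\{a,b,c\},\{c,d,e\},\{e,f,g\}$. $C$ is the loose triangle: vertices $x_1,x_2,x_3,y_1,y_2,y_3$, edges $\{x_1,y_3,x_2\},\{x_2,y_1,x_3\},\{x_3,y_2,x_1\}$. $M$ consists of two disjoint edges. $P^3_2$ is two edges sharing exactly one vertex; $K^3_3$ is a single edge; $P^3_2\cup K^3_3$ is their vertex-disjoint union (8 vertices, 3 edges). $\mathrm{ex}_3(n;\mathcal F\mid\mathcal G)$ is the maximum number of edges of an $n$-vertex 3-graph containing no member of $\mathcal F$ and containing some member of $\mathcal G$. *)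

theory Defs
  imports Main
begin

definition contains :: "'a set set \<Rightarrow> nat set set \<Rightarrow> bool" where
  "contains H F \<longleftrightarrow> (\<exists>f. inj_on f (\<Union>F) \<and> (\<forall>e\<in>F. f ` e \<in> H))"

definition three_graph :: "nat \<Rightarrow> nat set set \<Rightarrow> bool" where
  "three_graph n H \<longleftrightarrow> (\<forall>e\<in>H. e \<subseteq> {..<n} \<and> card e = 3)"

definition ex3 :: "nat \<Rightarrow> nat set set set \<Rightarrow> nat set set set \<Rightarrow> nat" where
  "ex3 n Fs Gs = Max {card H | H. three_graph n H \<and> (\<forall>F\<in>Fs. \<not> contains H F)
                                  \<and> (\<exists>G\<in>Gs. contains H G)}"

definition loose_path3 :: "nat set set" where
  "loose_path3 = {{0,1,2},{2,3,4},{4,5,6}}"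

text \<open>Loose triangle: x1=0, y3=1, x2=2, y1=3, x3=4, y2=5.\<close>
definition loose_triangle :: "nat set set" where
  "loose_triangle = {{0,1,2},{2,3,4},{4,5,0}}"

definition matching2 :: "nat set set" where
  "matching2 = {{0,1,2},{3,4,5}}"

definition P32_K33 :: "nat set set" where
  "P32_K33 = {{0,1,2},{2,3,4},{5,6,7}}"

end

theory Submission
  imports Defs
begin

text \<open>
  We show by induction on the number of vertices that a 3-graph on \<open>V\<close> containing none of
  \<open>P\<close>, \<open>C\<close>, \<open>P\<^sup>3\<^sub>2 \<union> K\<^sup>3\<^sub>3\<close> but two disjoint edges \<open>e\<close>, \<open>f\<close> has at most
  \<open>2|V| - 4\<close> edges.

  An edge meeting \<open>e\<close> in one vertex meets \<open>f\<close> in at least two, for otherwise a \<open>P\<close> or a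
  \<open>P\<^sup>3\<^sub>2 \<union> K\<^sup>3\<^sub>3\<close> appears. An edge meeting \<open>e\<close> in two vertices has the form
  \<open>(e - {m}) \<union> {x}\<close>, and two of them with different \<open>m\<close> must have the same \<open>x\<close>, for otherwise
  together with \<open>f\<close> they form a \<open>C\<close>, a \<open>P\<close> or a \<open>P\<^sup>3\<^sub>2 \<union> K\<^sup>3\<^sub>3\<close>. Hence either some vertex
  \<open>u\<close> of \<open>e\<close> lies in none of them, or there are at most three of them; in both cases there are
  at most \<open>|V| - 3\<close>. If every edge meets \<open>e\<close> or \<open>f\<close>, this gives \<open>2 + 2(|V| - 3)\<close> edges.
  Otherwise some edge \<open>g\<close> misses \<open>e\<close> and \<open>f\<close>, so no edge meets \<open>e\<close> in exactly one vertex,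
  and we delete either \<open>u\<close> (only \<open>e\<close> contains it) or the three vertices of \<open>e\<close> (losing at most
  four edges), and apply induction to the disjoint pair \<open>f\<close>, \<open>g\<close>.

  Two sunflowers with kernels \<open>{0,1}\<close> and \<open>{2,3}\<close> attain the bound: each edge contains one of
  the kernels, whereas each forbidden configuration has three edges pairwise sharing at most one
  vertex.
\<close>

lemma contains_if_distinct_list:
  assumes "distinct xs" and "\<Union>F \<subseteq> {..<length xs}" and "\<And>e. e \<in> F \<Longrightarrow> (!) xs ` e \<in> H"
  shows "contains H F"
  unfolding contains_def using assms inj_on_nth[of xs "\<Union>F"] by blast

lemma contains_mono: "H \<subseteq> H' \<Longrightarrow> contains H F \<Longrightarrow> contains H' F"
  unfolding contains_def by blast

lemma card3_obtain_others:
  assumes "card h = 3" "w \<in> h"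
  obtains a b where "h = {w,a,b}" "a \<noteq> b" "a \<noteq> w" "b \<noteq> w"
proof -
  have "card (h - {w}) = 2" using assms by simp
  then obtain a b where ab: "h - {w} = {a,b}" "a \<noteq> b" by (auto simp: card_2_iff)
  then have "h = {w,a,b}" using assms(2) by blast
  with ab that show ?thesis by blast
qed

lemma card3_obtain_third:
  assumes "card h = 3" "p \<in> h" "q \<in> h" "p \<noteq> q"
  obtains c where "h = {p,q,c}" "c \<noteq> p" "c \<noteq> q"
proof -
  obtain a b where "h = {p,a,b}" "a \<noteq> b" "a \<noteq> p" "b \<noteq> p"
    using card3_obtain_others[OF assms(1,2)] .
  with assms(3,4) that show ?thesis by (auto simp: insert_commute)
qed

lemma card3_Int2_obtain:
  assumes "card e = 3" "card h = 3" "card (h \<inter> e) = 2"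
  obtains m x where "m \<in> e" "x \<notin> e" "h = insert x (e - {m})"
proof -
  have fin: "finite e" "finite h" using assms by (auto intro: card_ge_0_finite)
  have "card (e - h) = 1" using card_Diff_subset_Int[of e h] fin assms by (simp add: Int_commute)
  then obtain m where m: "e - h = {m}" by (auto simp: card_1_singleton_iff)
  have "card (h - e) = 1" using card_Diff_subset_Int[of h e] fin assms by simp
  then obtain x where x: "h - e = {x}" by (auto simp: card_1_singleton_iff)
  have "h = insert x (e - {m})" using m x by blast
  with m x that show ?thesis by blast
qed

lemma contains_P32_K33I:
  assumes "h1 \<in> H" "h2 \<in> H" "h3 \<in> H" "card h1 = 3" "card h2 = 3" "card h3 = 3"
    "card (h1 \<inter> h2) = 1" "h3 \<inter> h1 = {}" "h3 \<inter> h2 = {}"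
  shows "contains H P32_K33"
proof -
  obtain w where w: "h1 \<inter> h2 = {w}" using assms(7) by (auto simp: card_1_singleton_iff)
  then have "w \<in> h1" "w \<in> h2" by blast+
  obtain a b where h1: "h1 = {w,a,b}" "a \<noteq> b" "a \<noteq> w" "b \<noteq> w"
    using card3_obtain_others[OF assms(4) \<open>w \<in> h1\<close>] .
  obtain c d where h2: "h2 = {w,c,d}" "c \<noteq> d" "c \<noteq> w" "d \<noteq> w"
    using card3_obtain_others[OF assms(5) \<open>w \<in> h2\<close>] .
  obtain x y z where h3: "h3 = {x,y,z}" "x \<noteq> y" "x \<noteq> z" "y \<noteq> z"
    using assms(6) by (auto simp: card_3_iff)
  have mem: "a \<in> h1" "b \<in> h1" "c \<in> h2" "d \<in> h2" "x \<in> h3" "y \<in> h3" "z \<in> h3"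
    using h1 h2 h3 by simp_all
  have "a \<notin> h2" "b \<notin> h2" "c \<notin> h1" "d \<notin> h1"
    using w mem h1(3,4) h2(3,4) by blast+
  moreover have "x \<notin> h1" "y \<notin> h1" "z \<notin> h1" "x \<notin> h2" "y \<notin> h2" "z \<notin> h2"
    using assms(8,9) mem by blast+
  ultimately have d: "distinct [a,b,w,c,d,x,y,z]"
    using \<open>w \<in> h1\<close> \<open>w \<in> h2\<close> mem h1(2-4) h2(2-4) h3(2-4) by auto
  have "{a,b,w} \<in> H" "{w,c,d} \<in> H" "{x,y,z} \<in> H"
    using assms(1-3) h1 h2 h3 by (simp_all add: insert_commute)
  then show ?thesis
    by (intro contains_if_distinct_list[OF d]) (auto simp: P32_K33_def)
qed

lemma contains_loose_path3I:
  assumes "h1 \<in> H" "h2 \<in> H" "h3 \<in> H" "card h1 = 3" "card h2 = 3" "card h3 = 3"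
    "card (h1 \<inter> h2) = 1" "card (h2 \<inter> h3) = 1" "h1 \<inter> h3 = {}"
  shows "contains H loose_path3"
proof -
  obtain v where v: "h1 \<inter> h2 = {v}" using assms(7) by (auto simp: card_1_singleton_iff)
  obtain w where w: "h2 \<inter> h3 = {w}" using assms(8) by (auto simp: card_1_singleton_iff)
  have vw: "v \<in> h1" "v \<in> h2" "w \<in> h2" "w \<in> h3" using v w by blast+
  have "v \<noteq> w" using vw assms(9) by blast
  obtain a b where h1: "h1 = {v,a,b}" "a \<noteq> b" "a \<noteq> v" "b \<noteq> v"
    using card3_obtain_others[OF assms(4) vw(1)] .
  obtain c where h2: "h2 = {v,w,c}" "c \<noteq> v" "c \<noteq> w"
    using card3_obtain_third[OF assms(5) vw(2,3) \<open>v \<noteq> w\<close>] .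
  obtain d g where h3: "h3 = {w,d,g}" "d \<noteq> g" "d \<noteq> w" "g \<noteq> w"
    using card3_obtain_others[OF assms(6) vw(4)] .
  have mem: "a \<in> h1" "b \<in> h1" "c \<in> h2" "d \<in> h3" "g \<in> h3"
    using h1 h2 h3 by simp_all
  have "a \<notin> h2" "b \<notin> h2" "c \<notin> h1" "c \<notin> h3" "d \<notin> h2" "g \<notin> h2"
    using v w mem h1(3,4) h2(2,3) h3(3,4) by blast+
  moreover have "a \<notin> h3" "b \<notin> h3" "v \<notin> h3" "d \<notin> h1" "g \<notin> h1" "w \<notin> h1"
    using assms(9) mem vw by blast+
  ultimately have d: "distinct [a,b,v,c,w,d,g]"
    using \<open>v \<noteq> w\<close> mem vw h1(2-4) h2(2,3) h3(2-4) by auto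
  have "{a,b,v} \<in> H" "{v,c,w} \<in> H" "{w,d,g} \<in> H"
    using assms(1-3) h1 h2 h3 by (simp_all add: insert_commute)
  then show ?thesis
    by (intro contains_if_distinct_list[OF d]) (auto simp: loose_path3_def)
qed

lemma contains_loose_triangleI:
  assumes "h1 \<in> H" "h2 \<in> H" "h3 \<in> H" "card h1 = 3" "card h2 = 3" "card h3 = 3"
    "card (h1 \<inter> h2) = 1" "card (h2 \<inter> h3) = 1" "card (h3 \<inter> h1) = 1" "h1 \<inter> h2 \<inter> h3 = {}"
  shows "contains H loose_triangle"
proof -
  obtain p where p: "h1 \<inter> h2 = {p}" using assms(7) by (auto simp: card_1_singleton_iff)
  obtain q where q: "h2 \<inter> h3 = {q}" using assms(8) by (auto simp: card_1_singleton_iff)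
  obtain r where r: "h3 \<inter> h1 = {r}" using assms(9) by (auto simp: card_1_singleton_iff)
  have pqr: "p \<in> h1" "p \<in> h2" "q \<in> h2" "q \<in> h3" "r \<in> h3" "r \<in> h1" using p q r by blast+
  have ne: "p \<noteq> q" "q \<noteq> r" "r \<noteq> p" using pqr assms(10) by auto
  obtain s where h1: "h1 = {r,p,s}" "s \<noteq> r" "s \<noteq> p"
    using card3_obtain_third[OF assms(4) pqr(6,1) ne(3)] .
  obtain t where h2: "h2 = {p,q,t}" "t \<noteq> p" "t \<noteq> q"
    using card3_obtain_third[OF assms(5) pqr(2,3) ne(1)] .
  obtain v where h3: "h3 = {q,r,v}" "v \<noteq> q" "v \<noteq> r"
    using card3_obtain_third[OF assms(6) pqr(4,5) ne(2)] .
  have stv: "s \<in> h1" "t \<in> h2" "v \<in> h3" using h1 h2 h3 by simp_all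
  have "s \<notin> h2" "s \<notin> h3" "t \<notin> h1" "t \<notin> h3" "v \<notin> h1" "v \<notin> h2"
    using p q r stv h1(2,3) h2(2,3) h3(2,3) by blast+
  then have d: "distinct [r,s,p,t,q,v]"
    using pqr stv ne h1(2,3) h2(2,3) h3(2,3) by auto
  have "{r,s,p} \<in> H" "{p,t,q} \<in> H" "{q,v,r} \<in> H"
    using assms(1-3) h1 h2 h3 by (simp_all add: insert_commute)
  then show ?thesis
    by (intro contains_if_distinct_list[OF d]) (auto simp: loose_triangle_def)
qed

definition forbidden_free :: "'a set set \<Rightarrow> bool" where
  "forbidden_free H \<longleftrightarrow>
     \<not> contains H loose_path3 \<and> \<not> contains H loose_triangle \<and> \<not> contains H P32_K33"

lemma forbidden_free_mono: "H' \<subseteq> H \<Longrightarrow> forbidden_free H \<Longrightarrow> forbidden_free H'"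
  unfolding forbidden_free_def using contains_mono by blast

definition edges_meeting_twice :: "'a set set \<Rightarrow> 'a set \<Rightarrow> 'a set set" where
  "edges_meeting_twice H e = {h \<in> H. card (h \<inter> e) = 2}"

locale forbidden_free_3graph =
  fixes H :: "'a set set"
  assumes card_edge: "h \<in> H \<Longrightarrow> card h = 3"
    and free: "forbidden_free H"
begin

lemma not_contains_forbidden:
  "\<not> contains H loose_path3" "\<not> contains H loose_triangle" "\<not> contains H P32_K33"
  using free by (simp_all add: forbidden_free_def)

lemma finite_edge: "h \<in> H \<Longrightarrow> finite h"
  using card_edge by (fastforce intro: card_ge_0_finite)

lemma card_Int_le_3: "h \<in> H \<Longrightarrow> card (h \<inter> e) \<le> 3"
  using card_edge finite_edge by (metis card_mono inf_le1)

lemma eq_if_card_Int_3: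
  assumes "h \<in> H" "e \<in> H" "card (h \<inter> e) = 3"
  shows "h = e"
proof -
  have "h \<inter> e = h" "h \<inter> e = e"
    using card_subset_eq[of h "h \<inter> e"] card_subset_eq[of e "h \<inter> e"] assms card_edge finite_edge
    by auto
  then show ?thesis by simp
qed

lemma card_Int_ge_2_if_card_Int_1:
  assumes "h \<in> H" "e \<in> H" "g \<in> H" "e \<inter> g = {}" "card (h \<inter> e) = 1"
  shows "2 \<le> card (h \<inter> g)"
proof (rule ccontr)
  assume "\<not> 2 \<le> card (h \<inter> g)"
  then have "card (h \<inter> g) = 0 \<or> card (h \<inter> g) = 1" by linarith
  then consider "h \<inter> g = {}" | "card (h \<inter> g) = 1"
    using finite_edge[OF assms(1)] by auto
  then show False
  proof cases
    case 1
    then have "contains H P32_K33"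
      using contains_P32_K33I[of h H e g] assms card_edge by (auto simp: Int_commute)
    with not_contains_forbidden show False by blast
  next
    case 2
    then have "contains H loose_path3"
      using contains_loose_path3I[of e H h g] assms card_edge by (auto simp: Int_commute)
    with not_contains_forbidden show False by blast
  qed
qed

lemma same_outer_vertex:
  assumes "e \<in> H" "f \<in> H" "e \<inter> f = {}"
    and "insert x (e - {m}) \<in> H" "insert y (e - {m'}) \<in> H"
    and "m \<in> e" "m' \<in> e" "m \<noteq> m'" "x \<notin> e" "y \<notin> e"
  shows "x = y"
proof (rule ccontr)
  assume "x \<noteq> y"
  obtain w where e: "e = {m,m',w}" "w \<noteq> m" "w \<noteq> m'"
    using card3_obtain_third[OF card_edge[OF assms(1)] assms(6-8)] .
  define h1 h2 where "h1 = insert x (e - {m})" and "h2 = insert y (e - {m'})"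
  have h1: "h1 = {x,m',w}" and h2: "h2 = {y,m,w}"
    using e assms(8) unfolding h1_def h2_def by auto
  have H: "h1 \<in> H" "h2 \<in> H" "f \<in> H" using assms(2,4,5) h1_def h2_def by simp_all
  have c: "card h1 = 3" "card h2 = 3" "card f = 3" using H card_edge by blast+
  have "h1 \<inter> h2 = {w}" using h1 h2 e assms(8-10) \<open>x \<noteq> y\<close> by auto
  moreover have "h1 \<inter> f = {x} \<inter> f" "h2 \<inter> f = {y} \<inter> f" using h1 h2 e assms(3) by auto
  ultimately consider
      (triangle) "card (h1 \<inter> h2) = 1" "card (h2 \<inter> f) = 1" "card (f \<inter> h1) = 1" "h1 \<inter> h2 \<inter> f = {}"
    | (path12) "card (h1 \<inter> h2) = 1" "card (h2 \<inter> f) = 1" "h1 \<inter> f = {}"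
    | (path21) "card (h2 \<inter> h1) = 1" "card (h1 \<inter> f) = 1" "h2 \<inter> f = {}"
    | (star) "card (h1 \<inter> h2) = 1" "f \<inter> h1 = {}" "f \<inter> h2 = {}"
    using e assms(3) by (cases "x \<in> f"; cases "y \<in> f") (auto simp: Int_commute)
  then show False
  proof cases
    case triangle
    then have "contains H loose_triangle" using contains_loose_triangleI[OF H c] by blast
    with not_contains_forbidden show False by blast
  next
    case path12
    then have "contains H loose_path3" using contains_loose_path3I[OF H c] by blast
    with not_contains_forbidden show False by blast
  next
    case path21
    then have "contains H loose_path3" using contains_loose_path3I[OF H(2,1,3) c(2,1,3)] by blast
    with not_contains_forbidden show False by blast
  next
    case star
    then have "contains H P32_K33" using contains_P32_K33I[OF H c] by blast
    with not_contains_forbidden show False by blast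
  qed
qed

lemma edges_meeting_twice_shape:
  assumes "e \<in> H" "h \<in> edges_meeting_twice H e"
  obtains m x where "m \<in> e" "x \<notin> e" "h = insert x (e - {m})"
  using card3_Int2_obtain[of e h] assms card_edge unfolding edges_meeting_twice_def by blast

lemma edges_meeting_twice_dichotomy:
  assumes e: "e \<in> H" and "f \<in> H" "e \<inter> f = {}"
  shows "(\<exists>u\<in>e. \<forall>h\<in>edges_meeting_twice H e. u \<notin> h) \<or> card (edges_meeting_twice H e) \<le> 3"
proof (cases "edges_meeting_twice H e = {}")
  case False
  let ?S = "edges_meeting_twice H e"
  have S: "?S \<subseteq> H" unfolding edges_meeting_twice_def by blast
  obtain h1 where "h1 \<in> ?S" using False by blast
  then obtain m1 x1 where m1: "m1 \<in> e" "x1 \<notin> e" and h1: "h1 = insert x1 (e - {m1})"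
    using edges_meeting_twice_shape[OF e] by blast
  show ?thesis
  proof (cases "\<forall>h\<in>?S. m1 \<notin> h")
    case False
    then obtain h2 where "h2 \<in> ?S" "m1 \<in> h2" by blast
    then obtain m2 x2 where m2: "m2 \<in> e" "x2 \<notin> e" and h2: "h2 = insert x2 (e - {m2})"
      using edges_meeting_twice_shape[OF e] by blast
    have "m1 \<noteq> m2" using \<open>m1 \<in> h2\<close> h2 m1 m2 by blast
    have "x1 = x2"
      using same_outer_vertex[OF assms, of x1 m1 x2 m2] \<open>h1 \<in> ?S\<close> \<open>h2 \<in> ?S\<close> S h1 h2 m1 m2 \<open>m1 \<noteq> m2\<close>
      by blast
    have "?S \<subseteq> (\<lambda>m. insert x1 (e - {m})) ` e"
    proof
      fix h assume "h \<in> ?S"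
      then obtain m x where m: "m \<in> e" "x \<notin> e" and h: "h = insert x (e - {m})"
        using edges_meeting_twice_shape[OF e] by blast
      have "x = x1"
      proof (cases "m = m1")
        case True
        then show ?thesis
          using same_outer_vertex[OF assms, of x m x2 m2] \<open>h \<in> ?S\<close> \<open>h2 \<in> ?S\<close> S h h2 m m2
            \<open>m1 \<noteq> m2\<close> \<open>x1 = x2\<close> by blast
      next
        case False
        then show ?thesis
          using same_outer_vertex[OF assms, of x m x1 m1] \<open>h \<in> ?S\<close> \<open>h1 \<in> ?S\<close> S h h1 m m1 by blast
      qed
      then show "h \<in> (\<lambda>m. insert x1 (e - {m})) ` e" using h m by blast
    qed
    then have "card ?S \<le> card e"
      using finite_edge[OF e] by (meson card_image_le card_mono finite_imageI order_trans)
    then show ?thesis using card_edge[OF e] by simp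
  qed (use m1 in blast)
qed simp

end

locale disjoint_edge_pair = forbidden_free_3graph H for H :: "'a set set" +
  fixes V :: "'a set" and e f :: "'a set"
  assumes finite_vertices: "finite V"
    and edge_subset: "h \<in> H \<Longrightarrow> h \<subseteq> V"
    and e_edge: "e \<in> H" and f_edge: "f \<in> H"
    and disjoint: "e \<inter> f = {}"
begin

lemma swap: "disjoint_edge_pair H V f e"
  by (unfold_locales) (use finite_vertices edge_subset f_edge e_edge disjoint in auto)

lemma restrict:
  assumes "H' \<subseteq> H" "V' \<subseteq> V" "\<And>h. h \<in> H' \<Longrightarrow> h \<subseteq> V'" "e' \<in> H'" "f' \<in> H'" "e' \<inter> f' = {}"
  shows "disjoint_edge_pair H' V' e' f'"
proof unfold_locales
  show "forbidden_free H'" using forbidden_free_mono[OF assms(1) free] .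
  show "finite V'" using finite_subset[OF assms(2) finite_vertices] .
qed (use assms card_edge in auto)

lemma finite_edges: "finite H"
  using finite_subset[of H "Pow V"] edge_subset finite_vertices by blast

lemma card_vertices_ge_6: "6 \<le> card V"
proof -
  have "card (e \<union> f) = 6"
    using card_Un_disjoint[OF finite_edge[OF e_edge] finite_edge[OF f_edge] disjoint]
      card_edge[OF e_edge] card_edge[OF f_edge] by simp
  moreover have "card (e \<union> f) \<le> card V"
    using card_mono[OF finite_vertices] edge_subset e_edge f_edge by simp
  ultimately show ?thesis by simp
qed

lemma card_edges_meeting_twice_le: "card (edges_meeting_twice H e) \<le> card V - 3"
  using edges_meeting_twice_dichotomy[OF e_edge f_edge disjoint]
proof
  assume "\<exists>u\<in>e. \<forall>h\<in>edges_meeting_twice H e. u \<notin> h"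
  then obtain u where u: "u \<in> e" "\<forall>h\<in>edges_meeting_twice H e. u \<notin> h" by blast
  have "edges_meeting_twice H e \<subseteq> (\<lambda>x. insert x (e - {u})) ` (V - e)"
  proof
    fix h assume h: "h \<in> edges_meeting_twice H e"
    then obtain m x where "m \<in> e" "x \<notin> e" "h = insert x (e - {m})"
      using edges_meeting_twice_shape[OF e_edge] by blast
    moreover have "h \<subseteq> V" using h edge_subset unfolding edges_meeting_twice_def by blast
    ultimately show "h \<in> (\<lambda>x. insert x (e - {u})) ` (V - e)"
      using u h by (cases "m = u") auto
  qed
  then have "card (edges_meeting_twice H e) \<le> card (V - e)"
    using finite_vertices by (meson card_image_le card_mono finite_Diff finite_imageI order_trans)
  also have "\<dots> = card V - 3"
    using card_Diff_subset[OF finite_edge[OF e_edge] edge_subset[OF e_edge]] card_edge[OF e_edge]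
    by simp
  finally show ?thesis .
next
  assume "card (edges_meeting_twice H e) \<le> 3"
  then show ?thesis using card_vertices_ge_6 by simp
qed

lemma edge_classification:
  assumes h: "h \<in> H"
  shows "h = e \<or> h = f \<or> h \<in> edges_meeting_twice H e \<or> h \<in> edges_meeting_twice H f
    \<or> (h \<inter> e = {} \<and> h \<inter> f = {})"
proof -
  have fin: "finite (h \<inter> e)" "finite (h \<inter> f)" using finite_edge[OF h] by simp_all
  have "card (h \<inter> e) \<le> 3" "card (h \<inter> f) \<le> 3" using card_Int_le_3[OF h] by blast+
  then have cases: "card (h \<inter> e) \<in> {0,1,2,3}" "card (h \<inter> f) \<in> {0,1,2,3}" by auto
  have "card (h \<inter> e) = 1 \<Longrightarrow> 2 \<le> card (h \<inter> f)"
    using card_Int_ge_2_if_card_Int_1[OF h e_edge f_edge disjoint] .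
  moreover have "card (h \<inter> f) = 1 \<Longrightarrow> 2 \<le> card (h \<inter> e)"
    using card_Int_ge_2_if_card_Int_1[OF h f_edge e_edge] disjoint by blast
  moreover have "card (h \<inter> e) = 3 \<Longrightarrow> h = e" "card (h \<inter> f) = 3 \<Longrightarrow> h = f"
    using eq_if_card_Int_3 h e_edge f_edge by blast+
  ultimately show ?thesis
    using cases h fin unfolding edges_meeting_twice_def by auto
qed

lemma subset_if_no_third_edge:
  assumes "\<forall>g\<in>H. g \<inter> e \<noteq> {} \<or> g \<inter> f \<noteq> {}"
  shows "H \<subseteq> {e,f} \<union> edges_meeting_twice H e \<union> edges_meeting_twice H f"
proof
  fix h assume "h \<in> H"
  then show "h \<in> {e,f} \<union> edges_meeting_twice H e \<union> edges_meeting_twice H f"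
    using edge_classification[of h] assms by auto
qed

lemma card_bound_without_third_edge:
  assumes "\<forall>g\<in>H. g \<inter> e \<noteq> {} \<or> g \<inter> f \<noteq> {}"
  shows "card H + 4 \<le> 2 * card V"
proof -
  let ?Se = "edges_meeting_twice H e" and ?Sf = "edges_meeting_twice H f"
  have fin: "finite ?Se" "finite ?Sf"
    using finite_edges by (simp_all add: edges_meeting_twice_def)
  have "card H \<le> card ({e,f} \<union> ?Se \<union> ?Sf)"
    using fin subset_if_no_third_edge[OF assms] by (intro card_mono) simp_all
  also have "\<dots> \<le> card ({e,f} \<union> ?Se) + card ?Sf" by (rule card_Un_le)
  also have "\<dots> \<le> 2 + card ?Se + card ?Sf"
    using card_Un_le[of "{e,f}" ?Se] card_insert_le_m1[of 2 "{f}" e] by simp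
  finally show ?thesis
    using card_edges_meeting_twice_le disjoint_edge_pair.card_edges_meeting_twice_le[OF swap]
      card_vertices_ge_6 by linarith
qed

lemma edge_meeting_e_cases:
  assumes g: "g \<in> H" "g \<inter> e = {}" "g \<inter> f = {}" and h: "h \<in> H" "h \<inter> e \<noteq> {}"
  shows "h = e \<or> h \<in> edges_meeting_twice H e"
proof -
  have "card (h \<inter> e) \<noteq> 1"
  proof
    assume "card (h \<inter> e) = 1"
    then have "2 \<le> card (h \<inter> f)" "2 \<le> card (h \<inter> g)"
      using card_Int_ge_2_if_card_Int_1[OF h(1) e_edge] f_edge g disjoint by (auto simp: Int_commute)
    moreover have "card (h \<inter> f) + card (h \<inter> g) = card ((h \<inter> f) \<union> (h \<inter> g))"
      using finite_edge[OF h(1)] g(3) by (intro card_Un_disjoint[symmetric]) auto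
    moreover have "card ((h \<inter> f) \<union> (h \<inter> g)) \<le> card h"
      using finite_edge[OF h(1)] by (intro card_mono) auto
    ultimately show False using card_edge[OF h(1)] by simp
  qed
  moreover have "card (h \<inter> e) \<noteq> 0" using h finite_edge by simp
  moreover have "card (h \<inter> e) \<le> 3" using card_Int_le_3[OF h(1)] .
  ultimately have "card (h \<inter> e) = 2 \<or> card (h \<inter> e) = 3" by linarith
  then show ?thesis
    using eq_if_card_Int_3[OF h(1) e_edge] h(1) unfolding edges_meeting_twice_def by blast
qed

lemma card_bound_by_deleting_vertex:
  assumes g: "g \<in> H" "g \<inter> e = {}" "g \<inter> f = {}"
    and u: "u \<in> e" "\<forall>h\<in>edges_meeting_twice H e. u \<notin> h"
    and IH: "\<And>H' e' f'. disjoint_edge_pair H' (V - {u}) e' f' \<Longrightarrow> card H' + 4 \<le> 2 * card (V - {u})"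
  shows "card H + 4 \<le> 2 * card V"
proof -
  let ?H = "{h \<in> H. u \<notin> h}"
  have sub: "H \<subseteq> insert e ?H"
  proof
    fix h assume h: "h \<in> H"
    show "h \<in> insert e ?H"
    proof (cases "u \<in> h")
      case True
      then have "h \<inter> e \<noteq> {}" using u(1) by blast
      then show ?thesis using edge_meeting_e_cases[OF g h] u(2) True by blast
    qed (use h in simp)
  qed
  have fin: "finite ?H" using finite_edges by simp
  have "card H \<le> card (insert e ?H)" using sub fin by (intro card_mono) simp_all
  also have "\<dots> \<le> card ?H + 1" using fin by (simp add: card_insert_if)
  finally have card_H: "card H \<le> card ?H + 1" .
  have "disjoint_edge_pair ?H (V - {u}) f g"
    by (rule restrict) (use u g f_edge disjoint in \<open>auto dest: edge_subset\<close>)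
  then have IH': "card ?H + 4 \<le> 2 * card (V - {u})" by (rule IH)
  have "card (V - {u}) = card V - 1" using u edge_subset[OF e_edge] finite_vertices by auto
  with card_H IH' card_vertices_ge_6 show ?thesis by linarith
qed

lemma card_bound_by_deleting_edge:
  assumes g: "g \<in> H" "g \<inter> e = {}" "g \<inter> f = {}"
    and small: "card (edges_meeting_twice H e) \<le> 3"
    and IH: "\<And>H' e' f'. disjoint_edge_pair H' (V - e) e' f' \<Longrightarrow> card H' + 4 \<le> 2 * card (V - e)"
  shows "card H + 4 \<le> 2 * card V"
proof -
  let ?S = "edges_meeting_twice H e" and ?H = "{h \<in> H. h \<inter> e = {}}"
  have sub: "H \<subseteq> insert e (?S \<union> ?H)"
    using edge_meeting_e_cases[OF g] by blast
  have fin: "finite ?S" "finite ?H"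
    using finite_edges by (simp_all add: edges_meeting_twice_def)
  have "card H \<le> card (insert e (?S \<union> ?H))" using sub fin by (intro card_mono) simp_all
  also have "\<dots> \<le> card (?S \<union> ?H) + 1" using fin by (simp add: card_insert_if)
  also have "\<dots> \<le> card ?S + card ?H + 1" using card_Un_le[of ?S ?H] by simp
  finally have card_H: "card H \<le> card ?H + 4" using small by linarith
  have "disjoint_edge_pair ?H (V - e) f g"
    by (rule restrict) (use g f_edge disjoint in \<open>auto dest: edge_subset\<close>)
  then have IH': "card ?H + 4 \<le> 2 * card (V - e)" by (rule IH)
  have "card (V - e) = card V - 3"
    using card_Diff_subset[OF finite_edge[OF e_edge] edge_subset[OF e_edge]] card_edge[OF e_edge]
    by simp
  with card_H IH' card_vertices_ge_6 show ?thesis by linarith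
qed

lemma card_bound_step:
  assumes IH: "\<And>H' (V' :: 'a set) e' f'. card V' < card V \<Longrightarrow> disjoint_edge_pair H' V' e' f'
    \<Longrightarrow> card H' + 4 \<le> 2 * card V'"
  shows "card H + 4 \<le> 2 * card V"
proof (cases "\<exists>g\<in>H. g \<inter> e = {} \<and> g \<inter> f = {}")
  case True
  then obtain g where g: "g \<in> H" "g \<inter> e = {}" "g \<inter> f = {}" by blast
  have e_sub: "e \<subseteq> V" and e_ne: "e \<noteq> {}" using edge_subset e_edge card_edge[OF e_edge] by auto
  from edges_meeting_twice_dichotomy[OF e_edge f_edge disjoint] show ?thesis
  proof
    assume "\<exists>u\<in>e. \<forall>h\<in>edges_meeting_twice H e. u \<notin> h"
    then obtain u where u: "u \<in> e" "\<forall>h\<in>edges_meeting_twice H e. u \<notin> h" by blast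
    have "card (V - {u}) < card V"
      using u e_sub finite_vertices by (intro card_Diff1_less) auto
    from IH[OF this] show ?thesis by (rule card_bound_by_deleting_vertex[OF g u])
  next
    assume small: "card (edges_meeting_twice H e) \<le> 3"
    have "card (V - e) < card V"
      using e_sub e_ne finite_vertices by (intro psubset_card_mono) auto
    from IH[OF this] show ?thesis by (rule card_bound_by_deleting_edge[OF g small])
  qed
qed (use card_bound_without_third_edge in blast)

end

theorem card_bound_if_disjoint_edge_pair:
  "disjoint_edge_pair H V e f \<Longrightarrow> card H + 4 \<le> 2 * card V"
proof (induction "card V" arbitrary: H V e f rule: less_induct)
  case less
  then show ?case using disjoint_edge_pair.card_bound_step by blast
qed

lemma card_le_if_contains_matching2:
  assumes H: "three_graph n H" "forbidden_free H" and M: "contains H matching2"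
  shows "card H \<le> 2 * n - 4"
proof -
  obtain \<phi> where inj: "inj_on \<phi> (\<Union>matching2)" and im: "\<forall>e\<in>matching2. \<phi> ` e \<in> H"
    using M unfolding contains_def by blast
  have "\<phi> ` {0,1,2} \<inter> \<phi> ` {3,4,5} = \<phi> ` ({0,1,2} \<inter> {3,4,5})"
    by (rule inj_on_image_Int[OF inj, symmetric]) (auto simp: matching2_def)
  then have "disjoint_edge_pair H {..<n} (\<phi> ` {0,1,2}) (\<phi> ` {3,4,5})"
    using H im unfolding three_graph_def by unfold_locales (auto simp: matching2_def)
  then have "card H + 4 \<le> 2 * card {..<n}" by (rule card_bound_if_disjoint_edge_pair)
  then show ?thesis by simp
qed

lemma not_contains_if_edges_through_two_pairs:
  assumes H: "\<forall>h\<in>H. p \<subseteq> h \<or> q \<subseteq> h" and pq: "card p = 2" "card q = 2"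
    and F: "\<forall>A\<in>F. finite A" "A \<in> F" "B \<in> F" "C \<in> F"
    and small: "card (A \<inter> B) \<le> 1" "card (B \<inter> C) \<le> 1" "card (A \<inter> C) \<le> 1"
  shows "\<not> contains H F"
proof
  assume "contains H F"
  then obtain \<phi> where inj: "inj_on \<phi> (\<Union>F)" and im: "\<forall>X\<in>F. \<phi> ` X \<in> H"
    unfolding contains_def by blast
  have no_common_pair: False
    if "X \<in> F" "Y \<in> F" "card (X \<inter> Y) \<le> 1" "card r = 2" "r \<subseteq> \<phi> ` X" "r \<subseteq> \<phi> ` Y" for X Y r
  proof -
    have eq: "\<phi> ` X \<inter> \<phi> ` Y = \<phi> ` (X \<inter> Y)"
      by (rule inj_on_image_Int[OF inj, symmetric]) (use that in auto)
    have fin: "finite (X \<inter> Y)" using F that(1) by blast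
    have "r \<subseteq> \<phi> ` (X \<inter> Y)" using that(5,6) eq by blast
    then have "card r \<le> card (\<phi> ` (X \<inter> Y))" using fin by (intro card_mono) auto
    also have "\<dots> \<le> card (X \<inter> Y)" using fin by (rule card_image_le)
    finally show False using that(3,4) by simp
  qed
  have "p \<subseteq> \<phi> ` X \<or> q \<subseteq> \<phi> ` X" if "X \<in> F" for X using H im that by blast
  with F(2-4) have "p \<subseteq> \<phi> ` A \<or> q \<subseteq> \<phi> ` A" "p \<subseteq> \<phi> ` B \<or> q \<subseteq> \<phi> ` B"
    "p \<subseteq> \<phi> ` C \<or> q \<subseteq> \<phi> ` C" by blast+
  then show False
    using no_common_pair[OF F(2,3) small(1)] no_common_pair[OF F(3,4) small(2)]
      no_common_pair[OF F(2,4) small(3)] pq by blast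
qed

definition extremal_graph :: "nat \<Rightarrow> nat set set" where
  "extremal_graph n = (\<lambda>x. {0,1,x}) ` {2..<n} \<union> (\<lambda>x. {2,3,x}) ` ({..<n} - {2,3})"

lemma forbidden_free_extremal_graph: "forbidden_free (extremal_graph n)"
proof -
  have H: "\<forall>h\<in>extremal_graph n. {0::nat,1} \<subseteq> h \<or> {2,3} \<subseteq> h"
    unfolding extremal_graph_def by auto
  have "\<not> contains (extremal_graph n) loose_path3"
    by (rule not_contains_if_edges_through_two_pairs[OF H,
          where A = "{0,1,2}" and B = "{2,3,4}" and C = "{4,5,6}"]) (simp_all add: loose_path3_def)
  moreover have "\<not> contains (extremal_graph n) loose_triangle"
    by (rule not_contains_if_edges_through_two_pairs[OF H,
          where A = "{0,1,2}" and B = "{2,3,4}" and C = "{4,5,0}"]) (simp_all add: loose_triangle_def)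
  moreover have "\<not> contains (extremal_graph n) P32_K33"
    by (rule not_contains_if_edges_through_two_pairs[OF H,
          where A = "{0,1,2}" and B = "{2,3,4}" and C = "{5,6,7}"]) (simp_all add: P32_K33_def)
  ultimately show ?thesis unfolding forbidden_free_def by blast
qed

lemma card_extremal_graph:
  assumes "n \<ge> 4" shows "card (extremal_graph n) = 2 * n - 4"
proof -
  have "inj_on (\<lambda>x. {0::nat,1,x}) {2..<n}" "inj_on (\<lambda>x. {2::nat,3,x}) ({..<n} - {2,3})"
    by (auto simp: inj_on_def doubleton_eq_iff insert_eq_iff)
  moreover have "(\<lambda>x. {0::nat,1,x}) ` {2..<n} \<inter> (\<lambda>x. {2,3,x}) ` ({..<n} - {2,3}) = {}"
    by (auto simp: doubleton_eq_iff insert_eq_iff)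
  ultimately have "card (extremal_graph n) = card {2..<n} + card ({..<n} - {2::nat,3})"
    unfolding extremal_graph_def by (simp add: card_Un_disjoint card_image)
  then show ?thesis using assms by (simp add: card_Diff_subset)
qed

lemma three_graph_extremal_graph: "n \<ge> 4 \<Longrightarrow> three_graph n (extremal_graph n)"
  unfolding three_graph_def extremal_graph_def by auto

lemma extremal_graph_contains_matching2:
  assumes "n \<ge> 6" shows "contains (extremal_graph n) matching2"
proof (rule contains_if_distinct_list[of "[0,1,4,2,3,5]"])
  have "{0,1,4} \<in> extremal_graph n" "{2,3,5} \<in> extremal_graph n"
    unfolding extremal_graph_def using assms by (auto intro!: image_eqI)
  then show "(!) [0,1,4,2,3,5] ` e \<in> extremal_graph n" if "e \<in> matching2" for e
    using that by (auto simp: matching2_def)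
qed (auto simp: matching2_def)

theorem mainTheorem7:
  fixes n :: nat
  assumes "n \<ge> 6"
  shows "ex3 n {loose_path3, loose_triangle, P32_K33} {matching2} = 2 * n - 4"
  unfolding ex3_def
proof (rule Max_eqI)
  let ?S = "{card H | H. three_graph n H \<and> (\<forall>F\<in>{loose_path3, loose_triangle, P32_K33}. \<not> contains H F)
                         \<and> (\<exists>G\<in>{matching2}. contains H G)}"
  show le: "y \<le> 2 * n - 4" if y: "y \<in> ?S" for y
  proof -
    obtain H where "y = card H" "three_graph n H" "forbidden_free H" "contains H matching2"
      using y unfolding forbidden_free_def by auto
    then show ?thesis using card_le_if_contains_matching2 by simp
  qed
  show "finite ?S" by (rule finite_subset[of _ "{..2 * n - 4}"]) (use le in auto)
  have "\<forall>F\<in>{loose_path3, loose_triangle, P32_K33}. \<not> contains (extremal_graph n) F"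
    using forbidden_free_extremal_graph by (simp add: forbidden_free_def)
  then show "2 * n - 4 \<in> ?S"
    using card_extremal_graph[of n] three_graph_extremal_graph[of n]
      extremal_graph_contains_matching2[OF assms] assms by force
qed

end
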